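(* Let $M$ be a smooth manifold and let $\gamma:[a,b]\to M$ be a tree-like path that is piecewise smoothly immersed. Then $\gamma$ is retraceable, i.e. retrace equivalent to a constant path.
   Context: A path $\gamma:[a,b]\to M$ is tree-like if there exist an $\mathbb{R}$-tree $T$ and continuous maps $\phi:[a,b]\to T$ and $\psi:T\to M$ with $\gamma=\psi\circ\phi$ and $\phi(a)=\phi(b)$. A path is piecewise smoothly immersed if it is a finite concatenation of smooth immersions. Paths are considered up to reparametrization and collapsing of constant subpaths; the retrace relation is the equivalence relation finitely generated by $\alpha aa^{-1}\beta\sim\alpha\beta$, where $a^{-1}(t)=a(1-t)$ and juxtaposition is concatenation. *)

theory Defs
  imports "HOL-Analysis.Analysis"
begin

coinductive smooth_on :: "'a::euclidean_space set \<Rightarrow> ('a \<Rightarrow> 'b::real_normed_vector) \<Rightarrow> bool"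
  for S where
  "f differentiable_on S \<Longrightarrow>
   (\<forall>v\<in>Basis. smooth_on S (\<lambda>x. frechet_derivative f (at x) v)) \<Longrightarrow>
   smooth_on S f"

definition smooth_manifold :: "'m::topological_space set \<Rightarrow> (('m \<Rightarrow> 'e::euclidean_space) \<times> 'm set) set \<Rightarrow> bool" where
  "smooth_manifold M A \<longleftrightarrow>
     Hausdorff_space (top_of_set M) \<and>
     second_countable (top_of_set M) \<and>
     (\<forall>(\<phi>, U)\<in>A. openin (top_of_set M) U \<and> open (\<phi> ` U) \<and>
                  homeomorphic_map (top_of_set U) (top_of_set (\<phi> ` U)) \<phi>) \<and>
     M \<subseteq> (\<Union>(\<phi>, U)\<in>A. U) \<and>
     (\<forall>(\<phi>, U)\<in>A. \<forall>(\<psi>, V)\<in>A.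
        smooth_on (\<phi> ` (U \<inter> V)) (\<psi> \<circ> inv_into U \<phi>))"

definition smooth_immersion_on ::
  "'m::topological_space set \<Rightarrow> (('m \<Rightarrow> 'e::euclidean_space) \<times> 'm set) set \<Rightarrow> real \<Rightarrow> real \<Rightarrow> (real \<Rightarrow> 'm) \<Rightarrow> bool" where
  "smooth_immersion_on M A s t c \<longleftrightarrow>
     s < t \<and>
     (\<exists>\<epsilon>>0. \<exists>c'. continuous_on {s-\<epsilon><..<t+\<epsilon>} c' \<and> c' ` {s-\<epsilon><..<t+\<epsilon>} \<subseteq> M \<and>
        (\<forall>x\<in>{s..t}. c' x = c x) \<and>
        (\<forall>(\<phi>, U)\<in>A.
           let S = {x\<in>{s-\<epsilon><..<t+\<epsilon>}. c' x \<in> U} in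
           smooth_on S (\<phi> \<circ> c') \<and>
           (\<forall>x\<in>S. vector_derivative (\<phi> \<circ> c') (at x) \<noteq> 0)))"

definition piecewise_smooth_immersion ::
  "'m::topological_space set \<Rightarrow> (('m \<Rightarrow> 'e::euclidean_space) \<times> 'm set) set \<Rightarrow> real \<Rightarrow> real \<Rightarrow> (real \<Rightarrow> 'm) \<Rightarrow> bool" where
  "piecewise_smooth_immersion M A a b \<gamma> \<longleftrightarrow>
     (\<exists>k::nat. \<exists>t::nat \<Rightarrow> real. k \<ge> 1 \<and> t 0 = a \<and> t k = b \<and>
        (\<forall>i<k. t i < t (Suc i) \<and> smooth_immersion_on M A (t i) (t (Suc i)) \<gamma>))"

definition is_rtree :: "'a::metric_space set \<Rightarrow> bool" where
  "is_rtree T \<longleftrightarrow>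
     (\<forall>x\<in>T. \<forall>y\<in>T. \<exists>h. h ` {0..dist x y} \<subseteq> T \<and> h 0 = x \<and> h (dist x y) = y \<and>
        (\<forall>s\<in>{0..dist x y}. \<forall>u\<in>{0..dist x y}. dist (h s) (h u) = \<bar>s - u\<bar>)) \<and>
     (\<forall>g h. arc g \<and> arc h \<and> path_image g \<subseteq> T \<and> path_image h \<subseteq> T \<and>
        pathstart g = pathstart h \<and> pathfinish g = pathfinish h \<longrightarrow>
        path_image g = path_image h)"

text \<open>Tree-like with respect to a given R-tree T (living in the metric type 'a).
The existential over the R-tree becomes a universally quantified type variable
in the theorem.\<close>

definition tree_like_via :: "'a::metric_space set \<Rightarrow> 'm::topological_space set \<Rightarrow> real \<Rightarrow> real \<Rightarrow> (real \<Rightarrow> 'm) \<Rightarrow> bool" where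
  "tree_like_via T M a b \<gamma> \<longleftrightarrow> is_rtree T \<and>
     (\<exists>\<phi> \<psi>. continuous_on {a..b} \<phi> \<and> \<phi> ` {a..b} \<subseteq> T \<and>
            continuous_on T \<psi> \<and> \<psi> ` T \<subseteq> M \<and>
            (\<forall>t\<in>{a..b}. \<gamma> t = \<psi> (\<phi> t)) \<and> \<phi> a = \<phi> b)"

text \<open>Two paths are elementarily equivalent if both are reparametrisations of a
common path by nondecreasing continuous surjections of [0,1] (this covers
reparametrisation and collapsing/inserting constant subpaths).\<close>

definition reparam_of :: "(real \<Rightarrow> 'm::topological_space) \<Rightarrow> (real \<Rightarrow> 'm) \<Rightarrow> bool" where
  "reparam_of p q \<longleftrightarrow> (\<exists>\<sigma>. continuous_on {0..1} \<sigma> \<and> \<sigma> ` {0..1} = {0..1} \<and>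
      mono_on {0..1} \<sigma> \<and> (\<forall>t\<in>{0..1}. p t = q (\<sigma> t)))"

definition path_equiv :: "'m::topological_space set \<Rightarrow> (real \<Rightarrow> 'm) \<Rightarrow> (real \<Rightarrow> 'm) \<Rightarrow> bool" where
  "path_equiv M = (\<lambda>p q. path p \<and> path_image p \<subseteq> M \<and> path q \<and> path_image q \<subseteq> M \<and>
      (\<exists>r. path r \<and> path_image r \<subseteq> M \<and> reparam_of p r \<and> reparam_of q r))\<^sup>*\<^sup>*"

definition retrace_step :: "'m::topological_space set \<Rightarrow> (real \<Rightarrow> 'm) \<Rightarrow> (real \<Rightarrow> 'm) \<Rightarrow> bool" where
  "retrace_step M p q \<longleftrightarrow>
     (\<exists>\<alpha> c \<beta>. path \<alpha> \<and> path c \<and> path \<beta> \<and>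
        path_image \<alpha> \<subseteq> M \<and> path_image c \<subseteq> M \<and> path_image \<beta> \<subseteq> M \<and>
        pathfinish \<alpha> = pathstart c \<and> pathstart \<beta> = pathstart c \<and>
        path_equiv M p (\<alpha> +++ (c +++ (reversepath c +++ \<beta>))) \<and>
        path_equiv M q (\<alpha> +++ \<beta>))"

definition retrace_equiv :: "'m::topological_space set \<Rightarrow> (real \<Rightarrow> 'm) \<Rightarrow> (real \<Rightarrow> 'm) \<Rightarrow> bool" where
  "retrace_equiv M = (\<lambda>p q. path_equiv M p q \<or> retrace_step M p q \<or> retrace_step M q p)\<^sup>*\<^sup>*"

definition retraceable :: "'m::topological_space set \<Rightarrow> real \<Rightarrow> real \<Rightarrow> (real \<Rightarrow> 'm) \<Rightarrow> bool" where
  "retraceable M a b \<gamma> \<longleftrightarrow>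
     (\<exists>x\<in>M. retrace_equiv M (\<lambda>t. \<gamma> (a + t * (b - a))) (\<lambda>t. x))"

end

theory Submission
  imports Defs
begin

(* Write the tree-like path as gamma = psi o phi with phi a closed path in an R-tree T.
   On each piece gamma is an immersion, hence locally injective, and so is phi; by a Lebesgue
   number argument phi is then, up to reparametrisation, a concatenation of arcs.  Arcs in T
   are unique, so if two consecutive arcs g, h meet again before their common endpoint, the end
   of g and the beginning of h are the same arc run back and forth: one retraction removes it
   and leaves a chain with fewer arcs.  Hence a closed chain retracts to a constant, and
   composing all retractions with psi retracts gamma. *)

section \<open>Subpaths with values in a topological space\<close>

(* The library's subpath requires a normed codomain; this is the same map for any codomain. *)
definition top_subpath :: "real \<Rightarrow> real \<Rightarrow> (real \<Rightarrow> 'a) \<Rightarrow> real \<Rightarrow> 'a" where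
  "top_subpath u v g = (\<lambda>x. g ((v - u) * x + u))"

lemma path_const_top [simp]: "path (\<lambda>_. x)"
  by (simp add: path_def)

lemma top_subpath_0_1 [simp]: "top_subpath 0 1 g = g"
  by (simp add: top_subpath_def)

lemma top_subpath_refl: "top_subpath u u g = (\<lambda>_. g u)"
  by (simp add: top_subpath_def)

lemma pathstart_top_subpath [simp]: "pathstart (top_subpath u v g) = g u"
  by (simp add: top_subpath_def pathstart_def)

lemma pathfinish_top_subpath [simp]: "pathfinish (top_subpath u v g) = g v"
  by (simp add: top_subpath_def pathfinish_def)

lemma affine_image_unit_interval:
  fixes u v :: real
  assumes "u \<le> v"
  shows "(\<lambda>x. (v - u) * x + u) ` {0..1} = {u..v}"
  using assms by (simp add: image_affinity_atLeastAtMost)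

lemma path_image_top_subpath:
  assumes "u \<le> v"
  shows "path_image (top_subpath u v g) = g ` {u..v}"
proof -
  have "path_image (top_subpath u v g) = g ` (\<lambda>x. (v - u) * x + u) ` {0..1}"
    by (simp add: path_image_def top_subpath_def image_image)
  then show ?thesis
    using affine_image_unit_interval[OF assms] by simp
qed

lemma path_top_subpath:
  assumes "u \<le> v" "continuous_on {u..v} g"
  shows "path (top_subpath u v g)"
  unfolding path_def top_subpath_def
  by (rule continuous_on_compose2[OF assms(2)])
     (use affine_image_unit_interval[OF assms(1)] in \<open>auto intro!: continuous_intros\<close>)

lemma path_top_subpath_of_path:
  assumes "path g" "u \<in> {0..1}" "v \<in> {0..1}" "u \<le> v"
  shows "path (top_subpath u v g)" "path_image (top_subpath u v g) \<subseteq> path_image g"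
proof -
  have "continuous_on {u..v} g"
    using assms continuous_on_subset unfolding path_def by fastforce
  then show "path (top_subpath u v g)"
    by (rule path_top_subpath[OF assms(4)])
  show "path_image (top_subpath u v g) \<subseteq> path_image g"
    using assms path_image_top_subpath[of u v g] by (auto simp: path_image_def)
qed

lemma arc_top_subpath:
  assumes "u < v" "continuous_on {u..v} g" "inj_on g {u..v}"
  shows "arc (top_subpath u v g)"
proof -
  have "inj_on (\<lambda>x. (v - u) * x + u) {0..1}"
    using assms(1) by (auto intro: inj_onI)
  then have "inj_on (g \<circ> (\<lambda>x. (v - u) * x + u)) {0..1}"
    using affine_image_unit_interval[of u v] assms by (auto intro: comp_inj_on)
  then show ?thesis
    using path_top_subpath[of u v g] assms by (simp add: arc_def top_subpath_def o_def)
qed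

lemma arc_top_subpath_of_arc:
  assumes "arc g" "u \<in> {0..1}" "v \<in> {0..1}" "u < v"
  shows "arc (top_subpath u v g)"
proof -
  have "continuous_on {u..v} g" "inj_on g {u..v}"
    using assms by (auto simp: arc_def path_def intro: continuous_on_subset inj_on_subset)
  then show ?thesis
    by (rule arc_top_subpath[OF assms(4)])
qed

section \<open>Reparametrisations\<close>

lemma reparam_ofI:
  assumes "continuous_on {0..1} \<sigma>" "mono_on {0..1} \<sigma>" "\<sigma> 0 = 0" "\<sigma> 1 = 1"
    and "\<And>t. t \<in> {0..1} \<Longrightarrow> p t = q (\<sigma> t)"
  shows "reparam_of p q"
proof -
  have "\<sigma> t \<in> {0..1}" if "t \<in> {0..1}" for t
    using that assms(2-4) mono_onD[OF assms(2), of 0 t] mono_onD[OF assms(2), of t 1] by auto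
  moreover have "{0..1} \<subseteq> \<sigma> ` {0..1}"
    using IVT'[of \<sigma> 0 _ 1] assms(1,3,4) by force
  ultimately show ?thesis
    unfolding reparam_of_def using assms by blast
qed

lemma reparam_ofE:
  assumes "reparam_of p q"
  obtains \<sigma> where "continuous_on {0..1} \<sigma>" "mono_on {0..1} \<sigma>" "\<sigma> 0 = 0" "\<sigma> 1 = 1"
    "\<And>t. t \<in> {0..1} \<Longrightarrow> \<sigma> t \<in> {0..1}" "\<And>t. t \<in> {0..1} \<Longrightarrow> p t = q (\<sigma> t)"
proof -
  obtain \<sigma> where \<sigma>: "continuous_on {0..1} \<sigma>" "\<sigma> ` {0..1} = {0..1}" "mono_on {0..1} \<sigma>"
    "\<And>t. t \<in> {0..1} \<Longrightarrow> p t = q (\<sigma> t)"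
    using assms unfolding reparam_of_def by blast
  have range: "\<sigma> t \<in> {0..1}" if "t \<in> {0..1}" for t
    using \<sigma>(2) that by blast
  have "0 \<in> \<sigma> ` {0..1}" "1 \<in> \<sigma> ` {0..1}"
    unfolding \<sigma>(2) by auto
  then obtain t0 t1 where "t0 \<in> {0..1}" "\<sigma> t0 = 0" "t1 \<in> {0..1}" "\<sigma> t1 = 1"
    by (metis imageE)
  then have "\<sigma> 0 \<le> 0" "1 \<le> \<sigma> 1"
    using mono_onD[OF \<sigma>(3), of 0 t0] mono_onD[OF \<sigma>(3), of t1 1] by auto
  then have "\<sigma> 0 = 0" "\<sigma> 1 = 1"
    using range[of 0] range[of 1] by auto
  with \<sigma> range show ?thesis
    using that by blast
qed

lemma reparam_of_ends:
  assumes "reparam_of p q"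
  shows "pathstart p = pathstart q" "pathfinish p = pathfinish q"
  using assms by (auto elim!: reparam_ofE simp: pathstart_def pathfinish_def)

lemma reparam_of_refl: "reparam_of p p"
  by (rule reparam_ofI[of id]) (auto simp: mono_on_def)

lemma reparam_of_comp: "reparam_of p q \<Longrightarrow> reparam_of (f \<circ> p) (f \<circ> q)"
  unfolding reparam_of_def by auto

lemma reparam_of_join:
  assumes "reparam_of p r" "reparam_of q s" "pathfinish r = pathstart s"
  shows "reparam_of (p +++ q) (r +++ s)"
proof -
  obtain \<sigma> where \<sigma>: "continuous_on {0..1} \<sigma>" "mono_on {0..1} \<sigma>" "\<sigma> 0 = 0" "\<sigma> 1 = 1"
    "\<And>t. t \<in> {0..1} \<Longrightarrow> \<sigma> t \<in> {0..1}" "\<And>t. t \<in> {0..1} \<Longrightarrow> p t = r (\<sigma> t)"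
    using assms(1) by (elim reparam_ofE) blast
  obtain \<tau> where \<tau>: "continuous_on {0..1} \<tau>" "mono_on {0..1} \<tau>" "\<tau> 0 = 0" "\<tau> 1 = 1"
    "\<And>t. t \<in> {0..1} \<Longrightarrow> \<tau> t \<in> {0..1}" "\<And>t. t \<in> {0..1} \<Longrightarrow> q t = s (\<tau> t)"
    using assms(2) by (elim reparam_ofE) blast
  define \<rho> where "\<rho> t = (if t \<le> 1/2 then \<sigma> (2 * t) / 2 else 1/2 + \<tau> (2 * t - 1) / 2)" for t :: real
  show ?thesis
  proof (rule reparam_ofI[of \<rho>])
    have "continuous_on {0..1/2} (\<lambda>t. \<sigma> (2 * t) / 2)"
      "continuous_on {1/2..1} (\<lambda>t. 1/2 + \<tau> (2 * t - 1) / 2)"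
      by (auto intro!: continuous_intros continuous_on_compose2[OF \<sigma>(1)]
          continuous_on_compose2[OF \<tau>(1)])
    then show "continuous_on {0..1} \<rho>"
      unfolding \<rho>_def using \<sigma>(4) \<tau>(3)
      by (intro continuous_on_cases_le[where h="\<lambda>t. t" and a="1/2"];
          force intro: continuous_on_subset)
    show "mono_on {0..1} \<rho>"
    proof (rule mono_onI)
      fix x y :: real
      assume xy: "x \<in> {0..1}" "y \<in> {0..1}" "x \<le> y"
      consider "y \<le> 1/2" | "x \<le> 1/2" "1/2 < y" | "1/2 < x"
        by linarith
      then show "\<rho> x \<le> \<rho> y"
      proof cases
        case 1
        then show ?thesis
          using xy mono_onD[OF \<sigma>(2), of "2 * x" "2 * y"] by (auto simp: \<rho>_def)
      next
        case 2
        then show ?thesis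
          using xy \<sigma>(5)[of "2 * x"] \<tau>(5)[of "2 * y - 1"] by (auto simp: \<rho>_def)
      next
        case 3
        then show ?thesis
          using xy mono_onD[OF \<tau>(2), of "2 * x - 1" "2 * y - 1"] by (auto simp: \<rho>_def)
      qed
    qed
    show "\<rho> 0 = 0" "\<rho> 1 = 1"
      using \<sigma>(3) \<tau>(4) by (auto simp: \<rho>_def)
    fix t :: real
    assume t: "t \<in> {0..1}"
    show "(p +++ q) t = (r +++ s) (\<rho> t)"
    proof (cases "t \<le> 1/2")
      case True
      then show ?thesis
        using t \<sigma>(5,6)[of "2 * t"] by (auto simp: joinpaths_def \<rho>_def)
    next
      case False
      then show ?thesis
        using t \<tau>(5,6)[of "2 * t - 1"] assms(3)
        by (auto simp: joinpaths_def \<rho>_def pathfinish_def pathstart_def)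
    qed
  qed
qed

lemma reparam_of_assoc: "reparam_of ((p +++ q) +++ r) (p +++ (q +++ r))"
proof -
  define \<sigma> where "\<sigma> t = (if t \<le> 1/4 then 2 * t else if t \<le> 1/2 then t + 1/4 else (t + 1) / 2)"
    for t :: real
  show ?thesis
  proof (rule reparam_ofI[of \<sigma>])
    show "continuous_on {0..1} \<sigma>"
      unfolding \<sigma>_def by (intro continuous_on_cases_le continuous_intros) auto
    show "mono_on {0..1} \<sigma>"
      by (auto simp: mono_on_def \<sigma>_def)
    fix t :: real
    assume "t \<in> {0..1}"
    consider "t \<le> 1/4" | "1/4 < t" "t \<le> 1/2" | "1/2 < t"
      by linarith
    then show "((p +++ q) +++ r) t = (p +++ (q +++ r)) (\<sigma> t)"
    proof cases
      case 2
      have "2 * (2 * (t + 1/4) - 1) = 2 * (2 * t) - (1::real)"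
        by (simp add: algebra_simps)
      with 2 show ?thesis
        by (simp add: joinpaths_def \<sigma>_def)
    next
      case 3
      then show ?thesis
        by (simp add: joinpaths_def \<sigma>_def field_simps)
    qed (simp add: joinpaths_def \<sigma>_def)
  qed (auto simp: \<sigma>_def)
qed

lemma reparam_of_const_join: "reparam_of ((\<lambda>_. g 0) +++ g) g"
  by (rule reparam_ofI[of "\<lambda>t. if t \<le> 1/2 then 0 else 2 * t - 1"])
     (auto intro!: continuous_on_cases_le continuous_intros simp: mono_on_def joinpaths_def)

lemma reparam_of_join_const: "reparam_of (g +++ (\<lambda>_. g 1)) g"
  by (rule reparam_ofI[of "\<lambda>t. if t \<le> 1/2 then 2 * t else 1"])
     (auto intro!: continuous_on_cases_le continuous_intros simp: mono_on_def joinpaths_def)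

lemma reparam_of_top_subpath_split:
  fixes u w v :: real
  assumes "u < w" "w < v"
  shows "reparam_of (top_subpath u v g) (top_subpath u w g +++ top_subpath w v g)"
proof -
  define \<sigma> where "\<sigma> t = (if (v - u) * t \<le> w - u then (v - u) * t / (2 * (w - u))
    else 1/2 + ((v - u) * t - (w - u)) / (2 * (v - w)))" for t :: real
  show ?thesis
  proof (rule reparam_ofI[of \<sigma>])
    show "continuous_on {0..1} \<sigma>"
      unfolding \<sigma>_def using assms
      by (intro continuous_on_cases_le continuous_intros) auto
    show "mono_on {0..1} \<sigma>"
    proof (rule mono_onI)
      fix x y :: real
      assume "x \<le> y"
      then have xy: "(v - u) * x \<le> (v - u) * y"
        using assms by (simp add: mult_left_mono)
      consider "(v - u) * x \<le> w - u" "(v - u) * y \<le> w - u"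
        | "(v - u) * x \<le> w - u" "\<not> (v - u) * y \<le> w - u"
        | "\<not> (v - u) * x \<le> w - u" "\<not> (v - u) * y \<le> w - u"
        using xy by linarith
      then show "\<sigma> x \<le> \<sigma> y"
      proof cases
        case 1
        then have "\<sigma> x = (v - u) * x / (2 * (w - u))" "\<sigma> y = (v - u) * y / (2 * (w - u))"
          by (simp_all add: \<sigma>_def)
        then show ?thesis
          using xy assms by (simp add: divide_right_mono)
      next
        case 2
        then have "\<sigma> x \<le> 1/2" "1/2 \<le> \<sigma> y"
          using assms by (simp_all add: \<sigma>_def field_simps)
        then show ?thesis
          by linarith
      next
        case 3
        then have "\<sigma> x = 1/2 + ((v - u) * x - (w - u)) / (2 * (v - w))"
          "\<sigma> y = 1/2 + ((v - u) * y - (w - u)) / (2 * (v - w))"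
          by (simp_all add: \<sigma>_def)
        then show ?thesis
          using xy assms by (simp add: divide_right_mono)
      qed
    qed
    show "\<sigma> 0 = 0" "\<sigma> 1 = 1"
      using assms by (simp_all add: \<sigma>_def field_simps)
    fix t :: real
    show "top_subpath u v g t = (top_subpath u w g +++ top_subpath w v g) (\<sigma> t)"
    proof (cases "(v - u) * t \<le> w - u")
      case True
      then have "\<sigma> t \<le> 1/2" "(w - u) * (2 * \<sigma> t) + u = (v - u) * t + u"
        using assms by (simp_all add: \<sigma>_def field_simps)
      then show ?thesis
        by (simp add: joinpaths_def top_subpath_def)
    next
      case False
      then have "\<not> \<sigma> t \<le> 1/2" "(v - w) * (2 * \<sigma> t - 1) + w = (v - u) * t + u"
        using assms by (simp_all add: \<sigma>_def field_simps)
      then show ?thesis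
        by (simp add: joinpaths_def top_subpath_def)
    qed
  qed
qed

lemma continuous_inj_on_unit_interval_mono:
  fixes \<sigma> :: "real \<Rightarrow> real"
  assumes "continuous_on {0..1} \<sigma>" "inj_on \<sigma> {0..1}" "\<sigma> 0 = 0"
    and "\<And>t. t \<in> {0..1} \<Longrightarrow> \<sigma> t \<in> {0..1}"
  shows "mono_on {0..1} \<sigma>"
proof (rule mono_onI)
  fix x y :: real
  assume xy: "x \<in> {0..1}" "y \<in> {0..1}" "x \<le> y"
  show "\<sigma> x \<le> \<sigma> y"
  proof (cases "x = 0 \<or> x = y")
    case True
    then show ?thesis
      using assms(3) assms(4)[OF xy(2)] by auto
  next
    case False
    have "continuous_on {0..y} \<sigma>" "inj_on \<sigma> {0..y}"
      using xy by (auto intro: continuous_on_subset[OF assms(1)] inj_on_subset[OF assms(2)])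
    with False xy have "(\<sigma> 0 < \<sigma> x \<and> \<sigma> x < \<sigma> y) \<or> (\<sigma> y < \<sigma> x \<and> \<sigma> x < \<sigma> 0)"
      by (intro continuous_inj_imp_mono) auto
    then show ?thesis
      using assms(3) assms(4)[OF xy(1)] by auto
  qed
qed

lemma reparam_of_arcs_same_image:
  fixes p q :: "real \<Rightarrow> 'a::t2_space"
  assumes "arc p" "arc q" "path_image p = path_image q" "pathstart p = pathstart q"
  shows "reparam_of p q"
proof -
  have cont: "continuous_on {0..1} p" "continuous_on {0..1} q"
    using assms(1,2) arc_imp_path path_def by blast+
  obtain q' where "homeomorphism {0..1} (path_image q) q q'"
    using homeomorphism_compact[of "{0..1}" q "path_image q"] cont assms(2)
    by (auto simp: path_image_def arc_def)
  then have q': "continuous_on (path_image q) q'" "\<And>x. x \<in> {0..1} \<Longrightarrow> q' (q x) = x"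
    "\<And>y. y \<in> path_image q \<Longrightarrow> q (q' y) = y" "q' ` path_image q = {0..1}"
    unfolding homeomorphism_def by auto
  define \<sigma> where "\<sigma> = q' \<circ> p"
  have p_in: "p t \<in> path_image q" if "t \<in> {0..1}" for t
    using that assms(3) by (auto simp: path_image_def)
  have \<sigma>_cont: "continuous_on {0..1} \<sigma>"
    unfolding \<sigma>_def using q'(1) assms(3)
    by (intro continuous_on_compose[OF cont(1)]) (simp add: path_image_def)
  have \<sigma>_image: "\<sigma> ` {0..1} = {0..1}"
    unfolding \<sigma>_def image_comp[symmetric] using q'(4) assms(3) by (simp add: path_image_def)
  have \<sigma>_inj: "inj_on \<sigma> {0..1}"
  proof (rule inj_onI)
    fix x y
    assume xy: "x \<in> {0..1}" "y \<in> {0..1}" "\<sigma> x = \<sigma> y"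
    then have "p x = p y"
      using q'(3) p_in unfolding \<sigma>_def by (metis comp_apply)
    then show "x = y"
      using assms(1) xy by (auto simp: arc_def inj_on_def)
  qed
  have \<sigma>_range: "\<sigma> t \<in> {0..1}" if "t \<in> {0..1}" for t
    using that \<sigma>_image by blast
  have \<sigma>_0: "\<sigma> 0 = 0"
    using assms(4) q'(2)[of 0] by (simp add: \<sigma>_def pathstart_def)
  have "mono_on {0..1} \<sigma>"
    using \<sigma>_cont \<sigma>_inj \<sigma>_0 \<sigma>_range by (rule continuous_inj_on_unit_interval_mono)
  moreover have "\<forall>t\<in>{0..1}. p t = q (\<sigma> t)"
    using q'(3) p_in by (simp add: \<sigma>_def)
  ultimately show ?thesis
    unfolding reparam_of_def using \<sigma>_cont \<sigma>_image by blast
qed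

section \<open>Path equivalence and retrace equivalence\<close>

lemma path_equiv_refl: "path_equiv M p p"
  by (simp add: path_equiv_def)

lemma path_equiv_trans [trans]: "path_equiv M p q \<Longrightarrow> path_equiv M q r \<Longrightarrow> path_equiv M p r"
  unfolding path_equiv_def by (rule rtranclp_trans)

lemma path_equiv_sym: "path_equiv M p q \<Longrightarrow> path_equiv M q p"
  unfolding path_equiv_def
  by (induction rule: rtranclp_induct) (auto intro: converse_rtranclp_into_rtranclp)

lemma path_equiv_common_reparam:
  assumes "path p" "path_image p \<subseteq> M" "path q" "path_image q \<subseteq> M" "path r" "path_image r \<subseteq> M"
    and "reparam_of p r" "reparam_of q r"
  shows "path_equiv M p q"
  unfolding path_equiv_def using assms by (intro r_into_rtranclp) blast

lemma path_equiv_reparam: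
  assumes "path p" "path_image p \<subseteq> M" "path r" "path_image r \<subseteq> M" "reparam_of p r"
  shows "path_equiv M p r"
  using assms reparam_of_refl by (intro path_equiv_common_reparam[of p M r r])

lemma path_equiv_ends:
  assumes "path_equiv M p q"
  shows "pathstart p = pathstart q" "pathfinish p = pathfinish q"
  using assms unfolding path_equiv_def
  by (induction rule: rtranclp_induct) (metis reparam_of_ends)+

lemma path_equiv_imp_path:
  assumes "path_equiv M p q" "path p" "path_image p \<subseteq> M"
  shows "path q" "path_image q \<subseteq> M"
  using assms unfolding path_equiv_def
  by (induction rule: rtranclp_induct) auto

lemma path_equiv_join_left:
  assumes "path_equiv M p p'" "path p" "path_image p \<subseteq> M" "path q" "path_image q \<subseteq> M"
    and "pathfinish p = pathstart q"
  shows "path_equiv M (p +++ q) (p' +++ q)"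
  using assms(1) unfolding path_equiv_def
proof (induction rule: rtranclp_induct)
  case (step y z)
  then obtain r where r: "path y" "path_image y \<subseteq> M" "path z" "path_image z \<subseteq> M"
    "path r" "path_image r \<subseteq> M" "reparam_of y r" "reparam_of z r"
    by blast
  have "pathfinish y = pathstart q"
    using path_equiv_ends(2)[of M p y] step(1) assms(6) unfolding path_equiv_def by simp
  then have "pathfinish z = pathstart q" "pathfinish r = pathstart q"
    using reparam_of_ends(2) r(7,8) by metis+
  then have "path_equiv M (y +++ q) (z +++ q)"
    using r assms(4,5) \<open>pathfinish y = pathstart q\<close>
    by (intro path_equiv_common_reparam[of _ _ _ "r +++ q"] reparam_of_join reparam_of_refl)
       (auto simp: path_image_join)
  with step(3) show ?case
    unfolding path_equiv_def by (rule rtranclp_trans)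
qed simp

lemma path_equiv_join_right:
  assumes "path_equiv M q q'" "path p" "path_image p \<subseteq> M" "path q" "path_image q \<subseteq> M"
    and "pathfinish p = pathstart q"
  shows "path_equiv M (p +++ q) (p +++ q')"
  using assms(1) unfolding path_equiv_def
proof (induction rule: rtranclp_induct)
  case (step y z)
  then obtain r where r: "path y" "path_image y \<subseteq> M" "path z" "path_image z \<subseteq> M"
    "path r" "path_image r \<subseteq> M" "reparam_of y r" "reparam_of z r"
    by blast
  have "pathstart y = pathfinish p"
    using path_equiv_ends(1)[of M q y] step(1) assms(6) unfolding path_equiv_def by simp
  then have "pathstart z = pathfinish p" "pathstart r = pathfinish p"
    using reparam_of_ends(1) r(7,8) by metis+
  then have "path_equiv M (p +++ y) (p +++ z)"
    using r assms(2,3) \<open>pathstart y = pathfinish p\<close>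
    by (intro path_equiv_common_reparam[of _ _ _ "p +++ r"] reparam_of_join reparam_of_refl)
       (auto simp: path_image_join)
  with step(3) show ?case
    unfolding path_equiv_def by (rule rtranclp_trans)
qed simp

lemma path_equiv_join:
  assumes "path_equiv M p p'" "path_equiv M q q'"
    and "path p" "path_image p \<subseteq> M" "path q" "path_image q \<subseteq> M" "pathfinish p = pathstart q"
  shows "path_equiv M (p +++ q) (p' +++ q')"
proof -
  have "path_equiv M (p +++ q) (p' +++ q)"
    using assms by (intro path_equiv_join_left)
  also have "path_equiv M (p' +++ q) (p' +++ q')"
    using assms path_equiv_imp_path[OF assms(1)] path_equiv_ends[OF assms(1)]
    by (intro path_equiv_join_right) auto
  finally show ?thesis .
qed

lemma path_equiv_assoc:
  assumes "path p" "path q" "path r" "path_image p \<subseteq> M" "path_image q \<subseteq> M" "path_image r \<subseteq> M"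
    and "pathfinish p = pathstart q" "pathfinish q = pathstart r"
  shows "path_equiv M ((p +++ q) +++ r) (p +++ (q +++ r))"
  using assms by (intro path_equiv_reparam reparam_of_assoc) (auto simp: path_image_join)

lemma path_equiv_const_join:
  assumes "path g" "path_image g \<subseteq> M"
  shows "path_equiv M ((\<lambda>_. pathstart g) +++ g) g"
  using assms pathstart_in_path_image[of g] reparam_of_const_join[of g]
  by (intro path_equiv_reparam) (auto simp: path_image_join pathstart_def pathfinish_def)

lemma path_equiv_join_const:
  assumes "path g" "path_image g \<subseteq> M"
  shows "path_equiv M (g +++ (\<lambda>_. pathfinish g)) g"
  using assms pathfinish_in_path_image[of g] reparam_of_join_const[of g]
  by (intro path_equiv_reparam) (auto simp: path_image_join pathstart_def pathfinish_def)

lemma path_equiv_cong: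
  assumes "path q" "path_image q \<subseteq> M" "\<And>t. t \<in> {0..1} \<Longrightarrow> p t = q t"
  shows "path_equiv M p q"
proof -
  have "path p"
    using assms(1,3) unfolding path_def by (auto intro: continuous_on_eq)
  moreover have "path_image p = path_image q"
    using assms(3) by (auto simp: path_image_def)
  moreover have "reparam_of p q"
    using assms(3) by (intro reparam_ofI[of id]) (auto simp: mono_on_def)
  ultimately show ?thesis
    using assms by (intro path_equiv_reparam) auto
qed

lemma path_equiv_top_subpath_split:
  assumes "continuous_on {u..v} g" "g ` {u..v} \<subseteq> M" "u \<le> w" "w \<le> v"
  shows "path_equiv M (top_subpath u v g) (top_subpath u w g +++ top_subpath w v g)"
proof -
  have paths: "path (top_subpath x y g)" "path_image (top_subpath x y g) \<subseteq> M"
    if "u \<le> x" "x \<le> y" "y \<le> v" for x y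
    using that assms(1,2) path_image_top_subpath[of x y g]
    by (auto intro!: path_top_subpath intro: continuous_on_subset)
  consider "w = u" | "w = v" | "u < w" "w < v"
    using assms(3,4) by linarith
  then show ?thesis
  proof cases
    case 1
    have "path_equiv M ((\<lambda>_. g u) +++ top_subpath u v g) (top_subpath u v g)"
      using path_equiv_const_join[of "top_subpath u v g" M] paths[of u v] assms by simp
    with 1 show ?thesis
      by (simp add: top_subpath_refl path_equiv_sym)
  next
    case 2
    have "path_equiv M (top_subpath u v g +++ (\<lambda>_. g v)) (top_subpath u v g)"
      using path_equiv_join_const[of "top_subpath u v g" M] paths[of u v] assms by simp
    with 2 show ?thesis
      by (simp add: top_subpath_refl path_equiv_sym)
  next
    case 3
    then show ?thesis
      using paths[of u v] paths[of u w] paths[of w v]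
      by (intro path_equiv_reparam reparam_of_top_subpath_split) (auto simp: path_image_join)
  qed
qed

lemma path_equiv_split_path:
  assumes "path g" "path_image g \<subseteq> M" "s \<in> {0..1}"
  shows "path_equiv M g (top_subpath 0 s g +++ top_subpath s 1 g)"
  using assms path_equiv_top_subpath_split[of 0 1 g M s]
  by (simp add: path_def path_image_def)

lemma retrace_equiv_refl: "retrace_equiv M p p"
  by (simp add: retrace_equiv_def)

lemma retrace_equiv_of_path_equiv: "path_equiv M p q \<Longrightarrow> retrace_equiv M p q"
  unfolding retrace_equiv_def by (intro r_into_rtranclp) simp

lemma retrace_equiv_of_step: "retrace_step M p q \<Longrightarrow> retrace_equiv M p q"
  unfolding retrace_equiv_def by (intro r_into_rtranclp) simp

lemma retrace_equiv_trans [trans]: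
  "retrace_equiv M p q \<Longrightarrow> retrace_equiv M q r \<Longrightarrow> retrace_equiv M p r"
  unfolding retrace_equiv_def by (rule rtranclp_trans)

lemma retrace_step_ends:
  assumes "retrace_step M p q"
  shows "pathstart p = pathstart q" "pathfinish p = pathfinish q"
  using assms unfolding retrace_step_def by (metis path_equiv_ends pathstart_join pathfinish_join)+

lemma retrace_equiv_ends:
  assumes "retrace_equiv M p q"
  shows "pathstart p = pathstart q" "pathfinish p = pathfinish q"
  using assms unfolding retrace_equiv_def
  by (induction rule: rtranclp_induct) (auto dest: path_equiv_ends retrace_step_ends)

section \<open>Chains of arcs in a space with unique arcs\<close>

definition unique_arcs :: "'a::topological_space set \<Rightarrow> bool" where
  "unique_arcs T \<longleftrightarrow> (\<forall>g h. arc g \<and> arc h \<and> path_image g \<subseteq> T \<and> path_image h \<subseteq> T \<and>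
     pathstart g = pathstart h \<and> pathfinish g = pathfinish h \<longrightarrow> path_image g = path_image h)"

lemma is_rtree_imp_unique_arcs: "is_rtree T \<Longrightarrow> unique_arcs T"
  unfolding is_rtree_def unique_arcs_def by blast

(* The index counts the arcs; the cancellation argument is an induction on it. *)
inductive arc_chain :: "'a::topological_space set \<Rightarrow> nat \<Rightarrow> (real \<Rightarrow> 'a) \<Rightarrow> bool" for T where
  arc_chain_point: "x \<in> T \<Longrightarrow> arc_chain T 0 (\<lambda>_. x)"
| arc_chain_cons: "arc g \<Longrightarrow> path_image g \<subseteq> T \<Longrightarrow> arc_chain T n q \<Longrightarrow> pathfinish g = pathstart q \<Longrightarrow>
    arc_chain T (Suc n) (g +++ q)"

lemma arc_chain_path:
  assumes "arc_chain T n q"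
  shows "path q" "path_image q \<subseteq> T"
  using assms by (induction rule: arc_chain.induct) (auto simp: arc_imp_path path_image_join)

lemma arc_chain_cons_top_subpath:
  assumes "arc g" "path_image g \<subseteq> T" "u \<in> {0..1}" "v \<in> {0..1}" "u \<le> v"
    and "arc_chain T n q" "g v = pathstart q"
  obtains m p where "m \<le> Suc n" "arc_chain T m p" "path_equiv T (top_subpath u v g +++ q) p"
proof (cases "u = v")
  case True
  then have "path_equiv T (top_subpath u v g +++ q) q"
    using assms(7) arc_chain_path[OF assms(6)] by (simp add: top_subpath_refl path_equiv_const_join)
  with assms(6) that show ?thesis
    by (meson le_SucI order_refl)
next
  case False
  have "arc (top_subpath u v g)"
    using False assms(1,3-5) by (intro arc_top_subpath_of_arc) auto
  moreover have "path_image (top_subpath u v g) \<subseteq> T"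
    using path_top_subpath_of_path(2)[of g u v] assms arc_imp_path by blast
  ultimately have "arc_chain T (Suc n) (top_subpath u v g +++ q)"
    using assms(6,7) by (intro arc_chain_cons) auto
  with that show ?thesis
    using path_equiv_refl by blast
qed

(* s is the first parameter at which g meets the image of h. *)
lemma arcs_first_meeting:
  fixes g h :: "real \<Rightarrow> 'a::t2_space"
  assumes "arc g" "arc h" "pathfinish g = pathstart h"
  obtains s u where "s \<in> {0..1}" "u \<in> {0..1}" "g s = h u" "s = 1 \<longleftrightarrow> u = 0"
    "path_image (top_subpath 0 s g) \<inter> path_image (top_subpath u 1 h) \<subseteq> {g s}"
proof -
  define S where "S = {0..1} \<inter> g -` path_image h"
  have "closed S"
    unfolding S_def using assms(1,2) arc_imp_path
    by (intro continuous_closed_preimage) (auto simp: path_def compact_imp_closed compact_path_image)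
  moreover have "1 \<in> S"
    using assms(3) pathstart_in_path_image[of h] by (simp add: S_def pathfinish_def)
  moreover have "bdd_below S"
    unfolding S_def by (auto intro: bdd_belowI[where m=0])
  ultimately have "Inf S \<in> S" and S_ge: "\<And>s. s \<in> S \<Longrightarrow> Inf S \<le> s"
    using closed_contains_Inf by (blast, simp add: cInf_lower)
  then obtain u where s: "Inf S \<in> {0..1}" and u: "u \<in> {0..1}" "g (Inf S) = h u"
    by (auto simp: S_def path_image_def)
  have "inj_on g {0..1}" "inj_on h {0..1}" "g 1 = h 0"
    using assms by (auto simp: arc_def pathstart_def pathfinish_def)
  then have "Inf S = 1 \<longleftrightarrow> u = 0"
    using u s by (metis atLeastAtMost_iff inj_onD order_refl zero_le_one)
  moreover have "path_image (top_subpath 0 (Inf S) g) \<inter> path_image (top_subpath u 1 h) \<subseteq> {g (Inf S)}"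
  proof
    fix x
    assume x: "x \<in> path_image (top_subpath 0 (Inf S) g) \<inter> path_image (top_subpath u 1 h)"
    then obtain s' where s': "s' \<in> {0..Inf S}" "x = g s'"
      using s by (auto simp: path_image_top_subpath)
    moreover have "x \<in> path_image h"
      using x u path_image_top_subpath[of u 1 h] by (auto simp: path_image_def)
    ultimately have "s' \<in> S"
      using s by (auto simp: S_def)
    with s' S_ge show "x \<in> {g (Inf S)}"
      by fastforce
  qed
  ultimately show ?thesis
    using that s u by blast
qed

(* By uniqueness of arcs, the part of h before u retraces the part of g after s. *)
lemma path_equiv_meeting_segments:
  fixes T :: "'a::t2_space set"
  assumes T: "unique_arcs T"
    and g: "arc g" "path_image g \<subseteq> T" and h: "arc h" "path_image h \<subseteq> T"
    and ends: "pathfinish g = pathstart h"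
    and su: "s \<in> {0..1}" "u \<in> {0..1}" "g s = h u" "s = 1 \<longleftrightarrow> u = 0"
  shows "path_equiv T (top_subpath 0 u h) (reversepath (top_subpath s 1 g))"
proof -
  define c where "c = top_subpath s 1 g"
  define c' where "c' = top_subpath 0 u h"
  have g1: "g 1 = h 0"
    using ends by (simp add: pathstart_def pathfinish_def)
  have paths: "path c" "path_image c \<subseteq> T" "path c'" "path_image c' \<subseteq> T"
    using path_top_subpath_of_path[OF arc_imp_path[OF g(1)], of s 1]
      path_top_subpath_of_path[OF arc_imp_path[OF h(1)], of 0 u] su g(2) h(2)
    by (auto simp: c_def c'_def)
  have "path_equiv T c' (reversepath c)"
  proof (cases "s = 1")
    case True
    then have "c' = reversepath c"
      using su g1 by (auto simp: c_def c'_def top_subpath_refl reversepath_def)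
    then show ?thesis
      by (simp add: path_equiv_refl)
  next
    case False
    then have "s < 1" "0 < u"
      using su by auto
    then have "arc c" "arc c'"
      using su g(1) h(1) unfolding c_def c'_def by (auto intro: arc_top_subpath_of_arc)
    moreover have "pathstart c = pathstart (reversepath c')" "pathfinish c = pathfinish (reversepath c')"
      using su(3) g1 by (simp_all add: c_def c'_def)
    ultimately have "path_image c = path_image c'"
      using T paths unfolding unique_arcs_def
      by (metis arc_reversepath path_image_reversepath)
    with \<open>arc c\<close> \<open>arc c'\<close> have "reparam_of c' (reversepath c)"
      using g1 by (intro reparam_of_arcs_same_image) (simp_all add: arc_reversepath c_def c'_def)
    then show ?thesis
      using paths by (intro path_equiv_reparam) auto
  qed
  then show ?thesis
    by (simp add: c_def c'_def)
qed

lemma retrace_equiv_backtrack: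
  fixes T :: "'a::t2_space set"
  assumes T: "unique_arcs T"
    and g: "arc g" "path_image g \<subseteq> T" and h: "arc h" "path_image h \<subseteq> T"
    and q: "path q" "path_image q \<subseteq> T"
    and ends: "pathfinish g = pathstart h" "pathfinish h = pathstart q"
    and su: "s \<in> {0..1}" "u \<in> {0..1}" "g s = h u" "s = 1 \<longleftrightarrow> u = 0"
  shows "retrace_equiv T (g +++ (h +++ q)) (top_subpath 0 s g +++ (top_subpath u 1 h +++ q))"
proof -
  define \<alpha> where "\<alpha> = top_subpath 0 s g"
  define c where "c = top_subpath s 1 g"
  define c' where "c' = top_subpath 0 u h"
  define h' where "h' = top_subpath u 1 h"
  have pg: "path g" and ph: "path h"
    using g h arc_imp_path by auto
  have g1: "g 1 = h 0" and h1: "h 1 = pathstart q"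
    using ends by (simp_all add: pathstart_def pathfinish_def)
  have "path \<alpha>" "path_image \<alpha> \<subseteq> path_image g" "path c" "path_image c \<subseteq> path_image g"
    using path_top_subpath_of_path[OF pg, of 0 s] path_top_subpath_of_path[OF pg, of s 1] su
    by (auto simp: \<alpha>_def c_def)
  moreover have "path c'" "path_image c' \<subseteq> path_image h" "path h'" "path_image h' \<subseteq> path_image h"
    using path_top_subpath_of_path[OF ph, of 0 u] path_top_subpath_of_path[OF ph, of u 1] su
    by (auto simp: c'_def h'_def)
  ultimately have paths: "path \<alpha>" "path c" "path c'" "path h'"
    "path_image \<alpha> \<subseteq> T" "path_image c \<subseteq> T" "path_image c' \<subseteq> T" "path_image h' \<subseteq> T"
    using g(2) h(2) by auto
  have c'_c: "path_equiv T c' (reversepath c)"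
    unfolding c_def c'_def using T g h ends(1) su by (rule path_equiv_meeting_segments)
  have join_ends: "pathfinish \<alpha> = g s" "pathstart c = g s" "pathfinish c = g 1"
    "pathstart c' = g 1" "pathfinish c' = g s" "pathstart h' = g s" "pathfinish h' = pathstart q"
    using su(3) g1 h1 by (simp_all add: \<alpha>_def c_def c'_def h'_def)
  have split_g: "path_equiv T g (\<alpha> +++ c)"
    unfolding \<alpha>_def c_def using pg g(2) su(1) by (rule path_equiv_split_path)
  have split_h: "path_equiv T h (c' +++ h')"
    unfolding c'_def h'_def using ph h(2) su(2) by (rule path_equiv_split_path)
  have "path_equiv T (g +++ (h +++ q)) ((\<alpha> +++ c) +++ ((c' +++ h') +++ q))"
    using pg ph g h q ends
    by (intro path_equiv_join[OF split_g path_equiv_join[OF split_h path_equiv_refl]])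
       (auto simp: path_image_join)
  also have "path_equiv T \<dots> ((\<alpha> +++ c) +++ ((reversepath c +++ h') +++ q))"
    using paths q join_ends g1
    by (intro path_equiv_join[OF path_equiv_refl path_equiv_join[OF path_equiv_join[OF c'_c
          path_equiv_refl] path_equiv_refl]])
       (auto simp: path_image_join)
  also have "path_equiv T \<dots> ((\<alpha> +++ c) +++ (reversepath c +++ (h' +++ q)))"
    using paths q join_ends g1
    by (intro path_equiv_join[OF path_equiv_refl path_equiv_assoc]) (auto simp: path_image_join)
  also have "path_equiv T \<dots> (\<alpha> +++ (c +++ (reversepath c +++ (h' +++ q))))"
    using paths q join_ends g1 by (intro path_equiv_assoc) (auto simp: path_image_join)
  finally have "retrace_step T (g +++ (h +++ q)) (\<alpha> +++ (h' +++ q))"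
    unfolding retrace_step_def using paths q join_ends
    by (intro exI[of _ \<alpha>] exI[of _ c] exI[of _ "h' +++ q"]) (auto simp: path_image_join path_equiv_refl)
  then show ?thesis
    unfolding \<alpha>_def h'_def by (rule retrace_equiv_of_step)
qed

lemma arc_chain_join_meeting_subpaths:
  assumes g: "arc g" "path_image g \<subseteq> T" and h: "arc h" "path_image h \<subseteq> T"
    and q: "arc_chain T n q" "h 1 = pathstart q"
    and su: "s \<in> {0..1}" "u \<in> {0..1}" "g s = h u"
    and disjoint: "path_image (top_subpath 0 s g) \<inter> path_image (top_subpath u 1 h) \<subseteq> {g s}"
  obtains m p where "m \<le> Suc n" "arc_chain T m p"
    "path_equiv T (top_subpath 0 s g +++ (top_subpath u 1 h +++ q)) p"
proof -
  define \<alpha> where "\<alpha> = top_subpath 0 s g"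
  define h' where "h' = top_subpath u 1 h"
  have pq: "path q" "path_image q \<subseteq> T"
    using arc_chain_path[OF q(1)] by auto
  have paths: "path \<alpha>" "path_image \<alpha> \<subseteq> T" "path h'" "path_image h' \<subseteq> T"
    using path_top_subpath_of_path[OF arc_imp_path[OF g(1)], of 0 s]
      path_top_subpath_of_path[OF arc_imp_path[OF h(1)], of u 1] su g(2) h(2)
    by (auto simp: \<alpha>_def h'_def)
  consider "s = 0" | "u = 1" | "0 < s" "u < 1"
    using su by fastforce
  then show ?thesis
  proof cases
    case 1
    obtain m p where mp: "m \<le> Suc n" "arc_chain T m p" "path_equiv T (h' +++ q) p"
      using arc_chain_cons_top_subpath[OF h su(2) _ _ q(1), where v=1] q(2) su(2)
      unfolding h'_def by auto
    have "\<alpha> = (\<lambda>_. pathstart (h' +++ q))"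
      using 1 su(3) by (simp add: \<alpha>_def h'_def top_subpath_refl)
    moreover have "path_equiv T ((\<lambda>_. pathstart (h' +++ q)) +++ (h' +++ q)) (h' +++ q)"
      using paths pq q(2) by (intro path_equiv_const_join) (auto simp: h'_def path_image_join)
    ultimately have "path_equiv T (\<alpha> +++ (h' +++ q)) (h' +++ q)"
      by simp
    with mp that show ?thesis
      unfolding \<alpha>_def h'_def using path_equiv_trans by blast
  next
    case 2
    obtain m p where mp: "m \<le> Suc n" "arc_chain T m p" "path_equiv T (\<alpha> +++ q) p"
      using arc_chain_cons_top_subpath[OF g _ su(1) _ q(1), where u=0] 2 su(1,3) q(2)
      unfolding \<alpha>_def by auto
    have "path_equiv T (h' +++ q) q"
      using 2 pq q(2) by (simp add: h'_def top_subpath_refl path_equiv_const_join)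
    then have "path_equiv T (\<alpha> +++ (h' +++ q)) (\<alpha> +++ q)"
      using paths pq 2 q(2) su(3)
      by (intro path_equiv_join[OF path_equiv_refl]) (auto simp: \<alpha>_def h'_def path_image_join)
    with mp that show ?thesis
      unfolding \<alpha>_def h'_def using path_equiv_trans by blast
  next
    case 3
    have "arc \<alpha>" "arc h'"
      using 3 su g(1) h(1) by (auto simp: \<alpha>_def h'_def intro: arc_top_subpath_of_arc)
    then have "arc (\<alpha> +++ h')"
      using disjoint su(3) by (intro arc_join) (auto simp: \<alpha>_def h'_def)
    then have "arc_chain T (Suc n) ((\<alpha> +++ h') +++ q)"
      using q paths by (intro arc_chain_cons) (auto simp: h'_def path_image_join \<alpha>_def su(3))
    moreover have "path_equiv T (\<alpha> +++ (h' +++ q)) ((\<alpha> +++ h') +++ q)"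
      using paths pq q(2) su(3)
      by (intro path_equiv_sym[OF path_equiv_assoc]) (auto simp: \<alpha>_def h'_def)
    ultimately show ?thesis
      unfolding \<alpha>_def h'_def using that by blast
  qed
qed

lemma arc_chain_backtrack_shorten:
  fixes T :: "'a::t2_space set"
  assumes T: "unique_arcs T"
    and g: "arc g" "path_image g \<subseteq> T" and h: "arc h" "path_image h \<subseteq> T"
    and q: "arc_chain T n q"
    and ends: "pathfinish g = pathstart h" "pathfinish h = pathstart q"
  obtains m p where "m \<le> Suc n" "arc_chain T m p" "retrace_equiv T (g +++ (h +++ q)) p"
proof -
  obtain s u where su: "s \<in> {0..1}" "u \<in> {0..1}" "g s = h u" "s = 1 \<longleftrightarrow> u = 0"
    and disjoint: "path_image (top_subpath 0 s g) \<inter> path_image (top_subpath u 1 h) \<subseteq> {g s}"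
    using arcs_first_meeting[OF g(1) h(1) ends(1)] by blast
  have "h 1 = pathstart q"
    using ends(2) by (simp add: pathfinish_def)
  then obtain m p where "m \<le> Suc n" "arc_chain T m p"
    and p: "path_equiv T (top_subpath 0 s g +++ (top_subpath u 1 h +++ q)) p"
    using arc_chain_join_meeting_subpaths[OF g h q _ su(1-3) disjoint] by blast
  moreover have "retrace_equiv T (g +++ (h +++ q)) (top_subpath 0 s g +++ (top_subpath u 1 h +++ q))"
    using T g h arc_chain_path[OF q] ends su by (rule retrace_equiv_backtrack)
  ultimately show ?thesis
    using that retrace_equiv_trans retrace_equiv_of_path_equiv by blast
qed

lemma closed_arc_chain_retrace_equiv_const:
  fixes T :: "'a::t2_space set"
  assumes "unique_arcs T" "arc_chain T n p" "pathfinish p = pathstart p"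
  shows "retrace_equiv T p (\<lambda>_. pathstart p)"
  using assms(2,3)
proof (induction n arbitrary: p rule: less_induct)
  case (less n)
  show ?case
  proof (cases n)
    case 0
    then obtain x where "p = (\<lambda>_. x)"
      using less.prems(1) by (auto elim: arc_chain.cases)
    then show ?thesis
      by (simp add: pathstart_def retrace_equiv_refl)
  next
    case (Suc k)
    then obtain g q where gq: "p = g +++ q" "arc g" "path_image g \<subseteq> T" "arc_chain T k q"
      "pathfinish g = pathstart q"
      using less.prems(1) by (auto elim: arc_chain.cases)
    show ?thesis
    proof (cases k)
      case 0
      then obtain x where "q = (\<lambda>_. x)"
        using gq(4) by (auto elim: arc_chain.cases)
      then have "pathfinish g = pathstart g"
        using gq(1,5) less.prems(2) by (simp add: pathstart_def pathfinish_def joinpaths_def)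
      with gq(2) show ?thesis
        using arc_distinct_ends by blast
    next
      case (Suc k')
      then obtain h q' where hq: "q = h +++ q'" "arc h" "path_image h \<subseteq> T" "arc_chain T k' q'"
        "pathfinish h = pathstart q'"
        using gq(4) by (auto elim: arc_chain.cases)
      obtain m p' where "m \<le> Suc k'" "arc_chain T m p'" and p': "retrace_equiv T p p'"
        using arc_chain_backtrack_shorten[OF assms(1) gq(2,3) hq(2,3,4) _ hq(5)] gq(1,5) hq(1) by auto
      moreover have "pathstart p' = pathstart p" "pathfinish p' = pathfinish p"
        using retrace_equiv_ends[OF p'] by simp_all
      ultimately have "retrace_equiv T p' (\<lambda>_. pathstart p)"
        using less.IH[of m p'] \<open>n = Suc k\<close> Suc less.prems(2) by simp
      with p' show ?thesis
        by (rule retrace_equiv_trans)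
    qed
  qed
qed

definition equiv_arc_chain :: "'a::topological_space set \<Rightarrow> (real \<Rightarrow> 'a) \<Rightarrow> bool" where
  "equiv_arc_chain T p \<longleftrightarrow> (\<exists>n q. arc_chain T n q \<and> path_equiv T p q)"

lemma equiv_arc_chain_path:
  assumes "equiv_arc_chain T p"
  shows "path p" "path_image p \<subseteq> T"
proof -
  obtain n q where q: "arc_chain T n q" "path_equiv T p q"
    using assms unfolding equiv_arc_chain_def by blast
  show "path p" "path_image p \<subseteq> T"
    using path_equiv_imp_path[OF path_equiv_sym[OF q(2)]] arc_chain_path[OF q(1)] by simp_all
qed

lemma equiv_arc_chain_path_equiv:
  "path_equiv T p q \<Longrightarrow> equiv_arc_chain T q \<Longrightarrow> equiv_arc_chain T p"
  unfolding equiv_arc_chain_def by (metis path_equiv_trans)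

lemma equiv_arc_chain_arc:
  assumes "arc g" "path_image g \<subseteq> T"
  shows "equiv_arc_chain T g"
proof -
  have "pathfinish g \<in> T"
    using assms pathfinish_in_path_image by blast
  then have "arc_chain T 1 (g +++ (\<lambda>_. pathfinish g))"
    using assms by (simp add: arc_chain_cons arc_chain_point pathstart_def)
  moreover have "path_equiv T g (g +++ (\<lambda>_. pathfinish g))"
    using assms arc_imp_path by (intro path_equiv_sym[OF path_equiv_join_const])
  ultimately show ?thesis
    unfolding equiv_arc_chain_def by blast
qed

lemma arc_chain_append:
  assumes "arc_chain T m p" "arc_chain T n q" "pathfinish p = pathstart q"
  shows "equiv_arc_chain T (p +++ q)"
  using assms
proof (induction rule: arc_chain.induct)
  case (arc_chain_point x)
  then have "path_equiv T ((\<lambda>_. x) +++ q) q"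
    using arc_chain_path[OF arc_chain_point.prems(1)] path_equiv_const_join[of q T]
    by (simp add: pathfinish_def)
  with arc_chain_point.prems(1) show ?case
    unfolding equiv_arc_chain_def by (intro exI conjI)
next
  case (arc_chain_cons g k p)
  have ends: "pathfinish g = pathstart p" "pathfinish p = pathstart q"
    using arc_chain_cons by simp_all
  obtain l r where r: "arc_chain T l r" "path_equiv T (p +++ q) r"
    using arc_chain_cons.IH[OF arc_chain_cons.prems(1) ends(2)] unfolding equiv_arc_chain_def by blast
  have paths: "path g" "path p" "path q" "path_image g \<subseteq> T" "path_image p \<subseteq> T" "path_image q \<subseteq> T"
    using arc_chain_cons.hyps(1,2) arc_chain_path[OF arc_chain_cons.hyps(3)]
      arc_chain_path[OF arc_chain_cons.prems(1)] arc_imp_path by auto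
  have "path_equiv T ((g +++ p) +++ q) (g +++ (p +++ q))"
    using paths ends by (rule path_equiv_assoc)
  also have "path_equiv T \<dots> (g +++ r)"
    using paths ends by (intro path_equiv_join[OF path_equiv_refl r(2)]) (auto simp: path_image_join)
  finally have "path_equiv T ((g +++ p) +++ q) (g +++ r)" .
  moreover have "arc_chain T (Suc l) (g +++ r)"
    using arc_chain_cons.hyps(1,2) r(1) ends(1) path_equiv_ends(1)[OF r(2)]
    by (intro arc_chain.arc_chain_cons) auto
  ultimately show ?case
    unfolding equiv_arc_chain_def by (intro exI conjI)
qed

lemma equiv_arc_chain_join:
  assumes "equiv_arc_chain T p" "equiv_arc_chain T q" "pathfinish p = pathstart q"
  shows "equiv_arc_chain T (p +++ q)"
proof -
  obtain m n p' q' where chains: "arc_chain T m p'" "arc_chain T n q'"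
    and equiv: "path_equiv T p p'" "path_equiv T q q'"
    using assms(1,2) unfolding equiv_arc_chain_def by blast
  have "path_equiv T (p +++ q) (p' +++ q')"
    using equiv_arc_chain_path[OF assms(1)] equiv_arc_chain_path[OF assms(2)] assms(3)
    by (intro path_equiv_join[OF equiv])
  moreover have "equiv_arc_chain T (p' +++ q')"
    using chains assms(3) path_equiv_ends[OF equiv(1)] path_equiv_ends[OF equiv(2)]
    by (intro arc_chain_append) auto
  ultimately show ?thesis
    by (rule equiv_arc_chain_path_equiv)
qed

lemma closed_equiv_arc_chain_retrace_equiv_const:
  fixes T :: "'a::t2_space set"
  assumes "unique_arcs T" "equiv_arc_chain T p" "pathfinish p = pathstart p"
  shows "retrace_equiv T p (\<lambda>_. pathstart p)"
proof -
  obtain n q where q: "arc_chain T n q" "path_equiv T p q"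
    using assms(2) unfolding equiv_arc_chain_def by blast
  then have "retrace_equiv T q (\<lambda>_. pathstart q)"
    using assms path_equiv_ends[OF q(2)] by (intro closed_arc_chain_retrace_equiv_const) auto
  then show ?thesis
    using retrace_equiv_trans[OF retrace_equiv_of_path_equiv[OF q(2)]] path_equiv_ends[OF q(2)]
    by simp
qed

section \<open>Locally injective paths are equivalent to arc chains\<close>

lemma equiv_arc_chain_top_subpath_inj:
  assumes "u \<le> v" "continuous_on {u..v} \<phi>" "\<phi> ` {u..v} \<subseteq> T" "inj_on \<phi> {u..v}"
  shows "equiv_arc_chain T (top_subpath u v \<phi>)"
proof (cases "u = v")
  case True
  then have "arc_chain T 0 (top_subpath u v \<phi>)"
    using assms(3) by (simp add: top_subpath_refl arc_chain_point)
  then show ?thesis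
    unfolding equiv_arc_chain_def using path_equiv_refl by blast
next
  case False
  then show ?thesis
    using assms path_image_top_subpath[of u v \<phi>]
    by (intro equiv_arc_chain_arc arc_top_subpath) auto
qed

lemma equiv_arc_chain_top_subpath_trans:
  assumes "continuous_on {u..v} \<phi>" "\<phi> ` {u..v} \<subseteq> T" "u \<le> w" "w \<le> v"
    and "equiv_arc_chain T (top_subpath u w \<phi>)" "equiv_arc_chain T (top_subpath w v \<phi>)"
  shows "equiv_arc_chain T (top_subpath u v \<phi>)"
  using assms by (metis equiv_arc_chain_join equiv_arc_chain_path_equiv path_equiv_top_subpath_split
      pathfinish_top_subpath pathstart_top_subpath)

definition locally_injective_on :: "(real \<Rightarrow> 'a) \<Rightarrow> real set \<Rightarrow> bool" where
  "locally_injective_on f S \<longleftrightarrow> (\<forall>x\<in>S. \<exists>\<delta>>0. inj_on f (ball x \<delta> \<inter> S))"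

lemma locally_injective_on_factor:
  assumes "locally_injective_on f S" "\<And>x. x \<in> S \<Longrightarrow> f x = g (h x)"
  shows "locally_injective_on h S"
  unfolding locally_injective_on_def
proof
  fix x
  assume "x \<in> S"
  then obtain \<delta> where "\<delta> > 0" "inj_on f (ball x \<delta> \<inter> S)"
    using assms(1) unfolding locally_injective_on_def by blast
  moreover have "inj_on f (ball x \<delta> \<inter> S) \<longleftrightarrow> inj_on (g \<circ> h) (ball x \<delta> \<inter> S)"
    using assms(2) by (intro inj_on_cong) simp
  ultimately show "\<exists>\<delta>>0. inj_on h (ball x \<delta> \<inter> S)"
    using inj_on_imageI2 by blast
qed

lemma locally_injective_on_Icc_uniform:
  assumes "s \<le> t" "locally_injective_on \<phi> {s..t}"
  obtains e where "e > 0" "\<And>u v. s \<le> u \<Longrightarrow> v \<le> t \<Longrightarrow> v - u < e \<Longrightarrow> inj_on \<phi> {u..v}"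
proof -
  obtain \<delta> where \<delta>: "\<And>x. x \<in> {s..t} \<Longrightarrow> \<delta> x > 0 \<and> inj_on \<phi> (ball x (\<delta> x) \<inter> {s..t})"
    using assms(2) unfolding locally_injective_on_def by metis
  have cover: "{s..t} \<subseteq> \<Union> ((\<lambda>x. ball x (\<delta> x)) ` {s..t})"
    using \<delta> by force
  obtain e where e: "e > 0"
    and small: "\<And>U. U \<subseteq> {s..t} \<Longrightarrow> diameter U < e \<Longrightarrow> \<exists>B\<in>(\<lambda>x. ball x (\<delta> x)) ` {s..t}. U \<subseteq> B"
    by (rule Lebesgue_number_lemma[OF compact_Icc _ cover]) (use assms(1) in auto)
  have "inj_on \<phi> {u..v}" if uv: "s \<le> u" "v \<le> t" "v - u < e" for u v
  proof (cases "u \<le> v")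
    case True
    then obtain x where "x \<in> {s..t}" "{u..v} \<subseteq> ball x (\<delta> x)"
      using small[of "{u..v}"] uv by auto
    moreover have "{u..v} \<subseteq> ball x (\<delta> x) \<inter> {s..t}"
      using uv calculation(2) by auto
    ultimately show ?thesis
      using \<delta> by (meson inj_on_subset)
  qed simp
  with e that show ?thesis
    by blast
qed

lemma equiv_arc_chain_locally_injective:
  assumes "s \<le> t" "continuous_on {s..t} \<phi>" "\<phi> ` {s..t} \<subseteq> T" "locally_injective_on \<phi> {s..t}"
  shows "equiv_arc_chain T (top_subpath s t \<phi>)"
proof -
  obtain e where e: "e > 0" "\<And>u v. s \<le> u \<Longrightarrow> v \<le> t \<Longrightarrow> v - u < e \<Longrightarrow> inj_on \<phi> {u..v}"
    using locally_injective_on_Icc_uniform[OF assms(1,4)] by blast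
  have piece: "equiv_arc_chain T (top_subpath u v \<phi>)"
    if "s \<le> u" "u \<le> v" "v \<le> t" "v - u < e" for u v
    using that assms(2,3) e(2)
    by (intro equiv_arc_chain_top_subpath_inj) (auto intro: continuous_on_subset)
  have steps: "equiv_arc_chain T (top_subpath u t \<phi>)"
    if "s \<le> u" "u \<le> t" "t - u \<le> real n * (e / 2)" for n u
    using that
  proof (induction n arbitrary: u)
    case 0
    then show ?case
      using piece[of u t] e(1) by simp
  next
    case (Suc n)
    show ?case
    proof (cases "t - u < e")
      case True
      then show ?thesis
        using piece[of u t] Suc.prems by simp
    next
      case False
      let ?w = "u + e / 2"
      have w: "s \<le> ?w" "u \<le> ?w" "?w \<le> t" "t - ?w \<le> real n * (e / 2)"
        using Suc.prems False e(1) by (auto simp: algebra_simps)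
      have "continuous_on {u..t} \<phi>" "\<phi> ` {u..t} \<subseteq> T"
        using assms(2,3) Suc.prems(1) by (auto intro: continuous_on_subset)
      moreover have "equiv_arc_chain T (top_subpath u ?w \<phi>)"
        using Suc.prems(1) w(2,3) e(1) by (intro piece) auto
      moreover have "equiv_arc_chain T (top_subpath ?w t \<phi>)"
        using Suc.IH w(1,3,4) .
      ultimately show ?thesis
        by (rule equiv_arc_chain_top_subpath_trans[OF _ _ w(2,3)])
    qed
  qed
  obtain n :: nat where "(t - s) / (e / 2) \<le> n"
    using real_arch_simple by blast
  then have "t - s \<le> real n * (e / 2)"
    using e(1) by (simp add: field_simps)
  then show ?thesis
    using steps[of s n] assms(1) by simp
qed

lemma partition_mono:
  assumes "\<And>i. i < k \<Longrightarrow> t i < t (Suc i)" "i \<le> j" "j \<le> k"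
  shows "t i \<le> (t j :: real)"
  using assms(2,3)
proof (induction j)
  case (Suc j)
  then show ?case
    using assms(1)[of j] by (cases "i = Suc j") auto
qed simp

lemma equiv_arc_chain_partition:
  assumes "continuous_on {t 0..t k} \<phi>" "\<phi> ` {t 0..t k} \<subseteq> T"
    and "\<And>i. i < k \<Longrightarrow> t i < t (Suc i)"
    and "\<And>i. i < k \<Longrightarrow> locally_injective_on \<phi> {t i..t (Suc i)}"
  shows "equiv_arc_chain T (top_subpath (t 0) (t k) \<phi>)"
proof -
  have mono: "t i \<le> t j" if "i \<le> j" "j \<le> k" for i j
    by (rule partition_mono[of k t, OF assms(3) that])
  have restrict: "continuous_on {t i..t j} \<phi>" "\<phi> ` {t i..t j} \<subseteq> T" if "i \<le> j" "j \<le> k" for i j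
  proof -
    have "{t i..t j} \<subseteq> {t 0..t k}"
      using mono[of 0 i] mono[of j k] that by auto
    then show "continuous_on {t i..t j} \<phi>" "\<phi> ` {t i..t j} \<subseteq> T"
      using assms(1,2) by (auto intro: continuous_on_subset[OF assms(1)])
  qed
  have "equiv_arc_chain T (top_subpath (t 0) (t j) \<phi>)" if "j \<le> k" for j
    using that
  proof (induction j)
    case 0
    show ?case
      using restrict[of 0 0] by (intro equiv_arc_chain_top_subpath_inj) auto
  next
    case (Suc j)
    have "continuous_on {t 0..t (Suc j)} \<phi>" "\<phi> ` {t 0..t (Suc j)} \<subseteq> T"
      using restrict[of 0 "Suc j"] Suc.prems by simp_all
    moreover have "t 0 \<le> t j" "t j \<le> t (Suc j)"
      using mono[of 0 j] mono[of j "Suc j"] Suc.prems by simp_all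
    moreover have "equiv_arc_chain T (top_subpath (t 0) (t j) \<phi>)"
      using Suc by simp
    moreover have "equiv_arc_chain T (top_subpath (t j) (t (Suc j)) \<phi>)"
      using restrict[of j "Suc j"] assms(3,4)[of j] Suc.prems
      by (intro equiv_arc_chain_locally_injective) auto
    ultimately show ?case
      by (rule equiv_arc_chain_top_subpath_trans)
  qed
  then show ?thesis
    by simp
qed

definition piecewise_locally_injective :: "real \<Rightarrow> real \<Rightarrow> (real \<Rightarrow> 'a) \<Rightarrow> bool" where
  "piecewise_locally_injective a b f \<longleftrightarrow> (\<exists>k t. t 0 = a \<and> t k = b \<and>
     (\<forall>i<k. t i < t (Suc i) \<and> locally_injective_on f {t i..t (Suc i)}))"

lemma piecewise_locally_injective_factor:
  assumes "piecewise_locally_injective a b f" "\<And>x. x \<in> {a..b} \<Longrightarrow> f x = g (h x)"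
  shows "piecewise_locally_injective a b h"
proof -
  obtain k t where t: "t 0 = a" "t k = b" "\<And>i. i < k \<Longrightarrow> t i < t (Suc i)"
    and pieces: "\<And>i. i < k \<Longrightarrow> locally_injective_on f {t i..t (Suc i)}"
    using assms(1) unfolding piecewise_locally_injective_def by metis
  have "locally_injective_on h {t i..t (Suc i)}" if "i < k" for i
  proof (rule locally_injective_on_factor[OF pieces[OF that]])
    have "a \<le> t i" "t (Suc i) \<le> b"
      using partition_mono[of k t 0 i, OF t(3)] partition_mono[of k t "Suc i" k, OF t(3)] that t(1,2)
      by simp_all
    then show "f x = g (h x)" if "x \<in> {t i..t (Suc i)}" for x
      using that assms(2) by simp
  qed
  with t show ?thesis
    unfolding piecewise_locally_injective_def by blast
qed

lemma equiv_arc_chain_piecewise_locally_injective: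
  assumes "continuous_on {a..b} \<phi>" "\<phi> ` {a..b} \<subseteq> T" "piecewise_locally_injective a b \<phi>"
  shows "equiv_arc_chain T (top_subpath a b \<phi>)"
proof -
  obtain k t where t: "t 0 = a" "t k = b" "\<And>i. i < k \<Longrightarrow> t i < t (Suc i)"
    and pieces: "\<And>i. i < k \<Longrightarrow> locally_injective_on \<phi> {t i..t (Suc i)}"
    using assms(3) unfolding piecewise_locally_injective_def by metis
  then show ?thesis
    using equiv_arc_chain_partition[of t k \<phi> T] assms(1,2) by simp
qed

section \<open>Immersions are locally injective\<close>

lemma smooth_on_vector_derivative:
  fixes f :: "real \<Rightarrow> 'b::real_normed_vector"
  assumes "smooth_on S f" "open S"
  shows "\<And>x. x \<in> S \<Longrightarrow> (f has_vector_derivative vector_derivative f (at x)) (at x)"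
    and "continuous_on S (\<lambda>x. vector_derivative f (at x))"
proof -
  have f: "f differentiable_on S" and f': "smooth_on S (\<lambda>x. frechet_derivative f (at x) 1)"
    using assms(1) by (auto elim: smooth_on.cases)
  show vd: "(f has_vector_derivative vector_derivative f (at x)) (at x)" if "x \<in> S" for x
    using f assms(2) that
    by (auto simp: differentiable_on_eq_differentiable_at vector_derivative_works[symmetric])
  have "vector_derivative f (at x) = frechet_derivative f (at x) 1" if "x \<in> S" for x
  proof -
    have "f differentiable (at x)"
      using f assms(2) that by (simp add: differentiable_on_eq_differentiable_at)
    then have "(f has_derivative frechet_derivative f (at x)) (at x)"
      by (simp add: frechet_derivative_works[symmetric])
    with vd[OF that] have "(\<lambda>h. h *\<^sub>R vector_derivative f (at x)) = frechet_derivative f (at x)"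
      unfolding has_vector_derivative_def by (rule has_derivative_unique)
    then show ?thesis
      by (metis scaleR_one)
  qed
  moreover have "continuous_on S (\<lambda>x. frechet_derivative f (at x) 1)"
    using f' by (auto elim: smooth_on.cases intro: differentiable_imp_continuous_on)
  ultimately show "continuous_on S (\<lambda>x. vector_derivative f (at x))"
    by (simp add: continuous_on_eq)
qed

lemma inj_on_ball_if_vector_derivative_nonzero:
  fixes f :: "real \<Rightarrow> 'a::real_inner"
  assumes "open S" "x \<in> S" "\<And>y. y \<in> S \<Longrightarrow> (f has_vector_derivative f' y) (at y)"
    and "continuous_on S f'" "f' x \<noteq> 0"
  obtains \<delta> where "\<delta> > 0" "inj_on f (ball x \<delta>)"
proof -
  obtain \<delta>1 where \<delta>1: "\<delta>1 > 0" "\<And>y. y \<in> S \<Longrightarrow> dist y x < \<delta>1 \<Longrightarrow> dist (f' y) (f' x) < norm (f' x)"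
    using assms(2,4,5) unfolding continuous_on_iff by (metis zero_less_norm_iff)
  obtain \<delta>2 where \<delta>2: "\<delta>2 > 0" "ball x \<delta>2 \<subseteq> S"
    using assms(1,2) open_contains_ball by blast
  define \<delta> where "\<delta> = min \<delta>1 \<delta>2"
  (* on the ball, f \<bullet> f' x has positive derivative, so it is strictly increasing *)
  have pos: "f' y \<bullet> f' x > 0" if "y \<in> ball x \<delta>" for y
  proof -
    have "norm (f' x - f' y) < norm (f' x)"
      using that \<delta>1(2)[of y] \<delta>2(2) by (auto simp: \<delta>_def dist_norm norm_minus_commute dist_commute)
    have "(f' x - f' y) \<bullet> f' x \<le> norm (f' x - f' y) * norm (f' x)"
      by (rule norm_cauchy_schwarz)
    also have "\<dots> < norm (f' x) * norm (f' x)"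
      using \<open>norm (f' x - f' y) < norm (f' x)\<close> assms(5) by (simp add: mult_strict_right_mono)
    also have "\<dots> = f' x \<bullet> f' x"
      by (simp add: power2_norm_eq_inner[symmetric] power2_eq_square)
    finally show ?thesis
      by (simp add: inner_diff_left)
  qed
  have "f y \<noteq> f z" if "y \<in> ball x \<delta>" "z \<in> ball x \<delta>" "y < z" for y z
  proof -
    have "f y \<bullet> f' x < f z \<bullet> f' x"
    proof (rule DERIV_pos_imp_increasing[OF \<open>y < z\<close>])
      fix w
      assume "y \<le> w" "w \<le> z"
      then have w: "w \<in> ball x \<delta>"
        using that by (auto simp: dist_real_def)
      then have "w \<in> S"
        using \<delta>2(2) by (auto simp: \<delta>_def)
      then have "((\<lambda>\<tau>. f \<tau> \<bullet> f' x) has_real_derivative f' w \<bullet> f' x) (at w)"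
        using bounded_linear.has_vector_derivative[OF bounded_linear_inner_left assms(3)]
        by (simp add: has_real_derivative_iff_has_vector_derivative)
      with pos[OF w] show "\<exists>D. ((\<lambda>\<tau>. f \<tau> \<bullet> f' x) has_real_derivative D) (at w) \<and> 0 < D"
        by blast
    qed
    then show ?thesis
      by auto
  qed
  then have "inj_on f (ball x \<delta>)"
    by (intro linorder_inj_onI') auto
  moreover have "\<delta> > 0"
    using \<delta>1 \<delta>2 by (simp add: \<delta>_def)
  ultimately show ?thesis
    using that by blast
qed

lemma smooth_immersion_locally_injective:
  assumes "smooth_manifold M A" "smooth_immersion_on M A s t c"
  shows "locally_injective_on c {s..t}"
  unfolding locally_injective_on_def
proof
  fix x
  assume x: "x \<in> {s..t}"
  obtain \<epsilon> c' where \<epsilon>: "\<epsilon> > 0" and c': "continuous_on {s-\<epsilon><..<t+\<epsilon>} c'" "c' ` {s-\<epsilon><..<t+\<epsilon>} \<subseteq> M"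
    "\<forall>x\<in>{s..t}. c' x = c x"
    and charts: "\<forall>(\<phi>, U)\<in>A. let S = {x\<in>{s-\<epsilon><..<t+\<epsilon>}. c' x \<in> U} in
           smooth_on S (\<phi> \<circ> c') \<and> (\<forall>x\<in>S. vector_derivative (\<phi> \<circ> c') (at x) \<noteq> 0)"
    using assms(2) unfolding smooth_immersion_on_def by (elim conjE exE) (rule that)
  have cover: "M \<subseteq> (\<Union>(\<phi>, U)\<in>A. U)"
    and chart_open: "\<forall>(\<phi>, U)\<in>A. openin (top_of_set M) U"
    using assms(1) unfolding smooth_manifold_def by auto
  define I where "I = {s-\<epsilon><..<t+\<epsilon>}"
  have "x \<in> I"
    using x \<epsilon> by (auto simp: I_def)
  then have "c' x \<in> M"
    using c'(2) by (auto simp: I_def)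
  then obtain \<phi> U where chart: "(\<phi>, U) \<in> A" "c' x \<in> U"
    using cover by auto
  then obtain W where "open W" "U = M \<inter> W"
    using chart_open by (auto simp: openin_open)
  define S where "S = {y\<in>I. c' y \<in> U}"
  have "S = I \<inter> c' -` W"
    using c'(2) \<open>U = M \<inter> W\<close> by (auto simp: S_def I_def)
  then have "open S"
    using c'(1) \<open>open W\<close> by (auto simp: I_def intro: continuous_open_preimage)
  have "x \<in> S"
    using \<open>x \<in> I\<close> chart(2) by (simp add: S_def)
  have "smooth_on S (\<phi> \<circ> c')" "\<forall>y\<in>S. vector_derivative (\<phi> \<circ> c') (at y) \<noteq> 0"
    using charts chart(1) by (auto simp: S_def I_def Let_def)
  then obtain \<delta> where "\<delta> > 0" "inj_on (\<phi> \<circ> c') (ball x \<delta>)"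
    using inj_on_ball_if_vector_derivative_nonzero[OF \<open>open S\<close> \<open>x \<in> S\<close>]
      smooth_on_vector_derivative[OF _ \<open>open S\<close>] \<open>x \<in> S\<close> by metis
  then have "inj_on c (ball x \<delta> \<inter> {s..t})"
    using c'(3) by (auto simp: inj_on_def)
  with \<open>\<delta> > 0\<close> show "\<exists>\<delta>>0. inj_on c (ball x \<delta> \<inter> {s..t})"
    by blast
qed

lemma piecewise_smooth_immersion_locally_injective:
  assumes "smooth_manifold M A" "piecewise_smooth_immersion M A a b \<gamma>"
  shows "piecewise_locally_injective a b \<gamma>"
  using assms smooth_immersion_locally_injective
  unfolding piecewise_smooth_immersion_def piecewise_locally_injective_def by metis

section \<open>Pushing forward along a continuous map\<close>

lemma path_compose_into:
  assumes "continuous_on T \<psi>" "\<psi> ` T \<subseteq> M" "path g" "path_image g \<subseteq> T"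
  shows "path (\<psi> \<circ> g)" "path_image (\<psi> \<circ> g) \<subseteq> M"
  using assms by (auto simp: path_image_compose intro: path_continuous_image continuous_on_subset)

lemma path_equiv_comp:
  assumes "continuous_on T \<psi>" "\<psi> ` T \<subseteq> M" "path_equiv T p q"
  shows "path_equiv M (\<psi> \<circ> p) (\<psi> \<circ> q)"
  using assms(3) unfolding path_equiv_def
proof (induction rule: rtranclp_induct)
  case (step y z)
  then obtain r where r: "path y" "path_image y \<subseteq> T" "path z" "path_image z \<subseteq> T"
    "path r" "path_image r \<subseteq> T" "reparam_of y r" "reparam_of z r"
    by blast
  note comp = path_compose_into[OF assms(1,2)]
  have "path_equiv M (\<psi> \<circ> y) (\<psi> \<circ> z)"
    using comp[OF r(1,2)] comp[OF r(3,4)] comp[OF r(5,6)] r(7,8)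
    by (intro path_equiv_common_reparam[of _ _ _ "\<psi> \<circ> r"] reparam_of_comp)
  with step(3) show ?case
    unfolding path_equiv_def by (rule rtranclp_trans)
qed simp

lemma retrace_step_comp:
  assumes "continuous_on T \<psi>" "\<psi> ` T \<subseteq> M" "retrace_step T p q"
  shows "retrace_step M (\<psi> \<circ> p) (\<psi> \<circ> q)"
proof -
  obtain \<alpha> c \<beta> where paths: "path \<alpha>" "path c" "path \<beta>"
    "path_image \<alpha> \<subseteq> T" "path_image c \<subseteq> T" "path_image \<beta> \<subseteq> T"
    and ends: "pathfinish \<alpha> = pathstart c" "pathstart \<beta> = pathstart c"
    and equiv: "path_equiv T p (\<alpha> +++ (c +++ (reversepath c +++ \<beta>)))" "path_equiv T q (\<alpha> +++ \<beta>)"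
    using assms(3) unfolding retrace_step_def by blast
  note comp = path_compose_into[OF assms(1,2)]
  show ?thesis
    unfolding retrace_step_def
  proof (intro exI conjI)
    show "path_equiv M (\<psi> \<circ> p) ((\<psi> \<circ> \<alpha>) +++ ((\<psi> \<circ> c) +++ (reversepath (\<psi> \<circ> c) +++ (\<psi> \<circ> \<beta>))))"
      using path_equiv_comp[OF assms(1,2) equiv(1)] by (simp add: path_compose_join path_compose_reversepath)
    show "path_equiv M (\<psi> \<circ> q) ((\<psi> \<circ> \<alpha>) +++ (\<psi> \<circ> \<beta>))"
      using path_equiv_comp[OF assms(1,2) equiv(2)] by (simp add: path_compose_join)
  qed (use comp[OF paths(1,4)] comp[OF paths(2,5)] comp[OF paths(3,6)] ends in
        \<open>simp_all add: pathstart_compose pathfinish_compose\<close>)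
qed

lemma retrace_equiv_comp:
  assumes "continuous_on T \<psi>" "\<psi> ` T \<subseteq> M" "retrace_equiv T p q"
  shows "retrace_equiv M (\<psi> \<circ> p) (\<psi> \<circ> q)"
  using assms(3) unfolding retrace_equiv_def
proof (induction rule: rtranclp_induct)
  case (step y z)
  then have "retrace_equiv M (\<psi> \<circ> y) (\<psi> \<circ> z)"
    using path_equiv_comp[OF assms(1,2)] retrace_step_comp[OF assms(1,2)]
    unfolding retrace_equiv_def by blast
  with step(3) show ?case
    unfolding retrace_equiv_def by (rule rtranclp_trans)
qed simp

lemma retraceable_if_lift_retrace_equiv_const:
  assumes "a \<le> b" "continuous_on {a..b} \<phi>" "\<phi> ` {a..b} \<subseteq> T" "continuous_on T \<psi>" "\<psi> ` T \<subseteq> M"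
    and "\<And>t. t \<in> {a..b} \<Longrightarrow> \<gamma> t = \<psi> (\<phi> t)"
    and "retrace_equiv T (top_subpath a b \<phi>) (\<lambda>_. \<phi> a)"
  shows "retraceable M a b \<gamma>"
proof -
  have "path_equiv M (\<lambda>s. \<gamma> (a + s * (b - a))) (\<psi> \<circ> top_subpath a b \<phi>)"
  proof (rule path_equiv_cong)
    show "path (\<psi> \<circ> top_subpath a b \<phi>)" "path_image (\<psi> \<circ> top_subpath a b \<phi>) \<subseteq> M"
      using path_compose_into[OF assms(4,5) path_top_subpath[OF assms(1,2)]] assms(1,3)
      by (simp_all add: path_image_top_subpath)
    show "\<gamma> (a + s * (b - a)) = (\<psi> \<circ> top_subpath a b \<phi>) s" if "s \<in> {0..1}" for s
      using that affine_image_unit_interval[OF assms(1)] assms(6)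
      by (force simp: top_subpath_def algebra_simps)
  qed
  moreover have "retrace_equiv M (\<psi> \<circ> top_subpath a b \<phi>) (\<lambda>_. \<psi> (\<phi> a))"
    using retrace_equiv_comp[OF assms(4,5,7)] by (simp add: o_def)
  moreover have "\<psi> (\<phi> a) \<in> M"
    using assms(1,3,5) by (simp add: image_subset_iff)
  ultimately show ?thesis
    unfolding retraceable_def by (meson retrace_equiv_of_path_equiv retrace_equiv_trans)
qed

theorem lemma3p2:
  fixes M :: "'m::topological_space set"
    and A :: "(('m \<Rightarrow> 'e::euclidean_space) \<times> 'm set) set"
    and T :: "'t::metric_space set"
    and \<gamma> :: "real \<Rightarrow> 'm"
    and a b :: real
  assumes "smooth_manifold M A"
    and "a < b"
    and "tree_like_via T M a b \<gamma>"
    and "piecewise_smooth_immersion M A a b \<gamma>"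
  shows "retraceable M a b \<gamma>"
proof -
  obtain \<phi> \<psi> where \<phi>: "continuous_on {a..b} \<phi>" "\<phi> ` {a..b} \<subseteq> T" "\<phi> a = \<phi> b"
    and \<psi>: "continuous_on T \<psi>" "\<psi> ` T \<subseteq> M" and \<gamma>: "\<And>t. t \<in> {a..b} \<Longrightarrow> \<gamma> t = \<psi> (\<phi> t)"
    using assms(3) unfolding tree_like_via_def by metis
  have "unique_arcs T"
    using assms(3) is_rtree_imp_unique_arcs unfolding tree_like_via_def by blast
  have "piecewise_locally_injective a b \<phi>"
    using piecewise_smooth_immersion_locally_injective[OF assms(1,4)] \<gamma>
    by (rule piecewise_locally_injective_factor)
  then have "equiv_arc_chain T (top_subpath a b \<phi>)"
    using \<phi>(1,2) by (intro equiv_arc_chain_piecewise_locally_injective)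
  then have "retrace_equiv T (top_subpath a b \<phi>) (\<lambda>_. \<phi> a)"
    using closed_equiv_arc_chain_retrace_equiv_const[OF \<open>unique_arcs T\<close>] \<phi>(3)
    by (metis pathfinish_top_subpath pathstart_top_subpath)
  then show ?thesis
    using assms(2) \<phi>(1,2) \<psi> \<gamma> by (intro retraceable_if_lift_retrace_equiv_const) auto
qed

end
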